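(* Let $b<1$, $\delta\in(0,1)$, $\rho\in(\max\{0,b\},1)$, $R>0$, $R_0>0$, $\kappa\in(0,1)$ and $t\ge0$. Then $$\Big(1-\frac{\kappa}{R}+\xi\Big)^{1-\rho}\Big(1-\Big(\frac{R_0}{R}\Big)^{\delta}\frac{e^{-\delta t}}{\big(1-\frac{\kappa}{R}+\xi\big)^{\delta}}\Big)\ge\Big(1-\Big(\frac{R_0}{R}\Big)^{\delta}e^{-\delta t}\Big)-\Big|\xi-\frac{\kappa}{R}\Big|$$ holds for every $\xi\in\big[\frac{R_0}{R}e^{-t}-1+\frac{\kappa}{R},\frac{\kappa}{R}\big]$. *)

theory Defs
  imports Complex_Main
begin

end

theory Submission
  imports Defs
begin

text \<open>Put \<open>x = 1 - \<kappa>/R + \<xi>\<close> and \<open>a = (R\<^sub>0/R) e\<^sup>-\<^sup>t\<close>, so that \<open>0 < a \<le> x \<le> 1\<close> and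
  \<open>\<bar>\<xi> - \<kappa>/R\<bar> = 1 - x\<close>. On \<open>(0, 1]\<close> every power with exponent in \<open>[0, 1]\<close> dominates
  the identity, so the left-hand side is at least \<open>x (1 - a\<^sup>\<delta> / x\<^sup>\<delta>) \<ge> x - a\<^sup>\<delta>\<close>, which
  is the right-hand side.\<close>

lemma powr_ge_self:
  fixes x p :: real
  assumes "0 \<le> x" "x \<le> 1" "0 \<le> p" "p \<le> 1"
  shows "x \<le> x powr p"
  using powr_mono'[of p 1 x] assms by (cases "x = 0") auto

lemma powr_ratio_bound:
  fixes a x p q :: real
  assumes "0 < a" "a \<le> x" "x \<le> 1"
    and "0 \<le> p" "p \<le> 1" "0 \<le> q" "q \<le> 1"
  shows "x powr p * (1 - a powr q / x powr q) \<ge> (1 - a powr q) - (1 - x)"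
proof -
  have "x > 0" using assms by linarith
  have ratio_le_1: "a powr q / x powr q \<le> 1"
    using powr_mono2[of q a x] assms \<open>x > 0\<close> by simp
  have "x - a powr q \<le> x * (1 - a powr q / x powr q)"
  proof -
    have "x / x powr q \<le> 1"
      using powr_ge_self[of x q] assms \<open>x > 0\<close> by simp
    then have "a powr q * (x / x powr q) \<le> a powr q"
      by (intro mult_left_le) auto
    then show ?thesis by (simp add: algebra_simps)
  qed
  also have "\<dots> \<le> x powr p * (1 - a powr q / x powr q)"
    using powr_ge_self[of x p] ratio_le_1 assms by (intro mult_right_mono) auto
  finally show ?thesis by simp
qed

theorem lemma2p19:
  fixes b \<delta> \<rho> R R\<^sub>0 \<kappa> t \<xi> :: real
  assumes "b < 1"
    and "0 < \<delta>" "\<delta> < 1"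
    and "max 0 b < \<rho>" "\<rho> < 1"
    and "R > 0" "R\<^sub>0 > 0"
    and "0 < \<kappa>" "\<kappa> < 1"
    and "t \<ge> 0"
    and "R\<^sub>0 / R * exp (- t) - 1 + \<kappa> / R \<le> \<xi>" "\<xi> \<le> \<kappa> / R"
  shows "(1 - \<kappa> / R + \<xi>) powr (1 - \<rho>) *
           (1 - (R\<^sub>0 / R) powr \<delta> * exp (- \<delta> * t) / (1 - \<kappa> / R + \<xi>) powr \<delta>)
         \<ge> (1 - (R\<^sub>0 / R) powr \<delta> * exp (- \<delta> * t)) - \<bar>\<xi> - \<kappa> / R\<bar>"
proof -
  define x where "x = 1 - \<kappa> / R + \<xi>"
  define a where "a = R\<^sub>0 / R * exp (- t)"
  have "0 < a" "a \<le> x" "x \<le> 1"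
    using assms unfolding a_def x_def by auto
  have a_powr: "a powr \<delta> = (R\<^sub>0 / R) powr \<delta> * exp (- \<delta> * t)"
    unfolding a_def by (simp only: powr_mult exp_powr_real) (simp add: mult.commute)
  have "\<bar>\<xi> - \<kappa> / R\<bar> = 1 - x"
    using assms unfolding x_def by simp
  then show ?thesis
    using powr_ratio_bound[of a x "1 - \<rho>" \<delta>] \<open>0 < a\<close> \<open>a \<le> x\<close> \<open>x \<le> 1\<close> assms
    unfolding a_powr x_def by simp
qed

end
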